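(* (i) Let $N\ge1$ be an integer, let $\nu$ have the distribution of $\frac1N\sum_{m=1}^N|\xi_m|$ where $\xi_1,\dots,\xi_N$ are independent standard normal variables, and let $\omega\sim\mathcal N(0,1)$. Then $\mathbb P(\nu\ge t)\le 2^N\,\mathbb P(\omega\ge\sqrt N t)$ for all $t>0$; moreover, if $t\ge2\sqrt{\ln2}$, then $\mathbb P(\nu\ge t)\le\exp(-Nt^2/4)$. (ii) Let $0\le k<j$ be integers and let $\nu=(\nu_0,\dots,\nu_{2^j-1})$ be a vector of independent random variables each distributed as $\frac1N\sum_{m=1}^N|\xi_m|$ (as in (i)), and let $\nu^*=(\nu^*_1,\dots,\nu^*_{2^j})$ be its non-increasing rearrangement. Then $$\mathbb P(\nu^*_{2^k}\ge t)\le\big[e\cdot2^{j-k}\exp(-Nt^2/4)\big]^{2^k},\qquad t\ge2\sqrt{\ln 2}.$$ *)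

theory Defs
  imports "HOL-Probability.Probability"
begin

definition std_gauss :: "real measure" where
  "std_gauss = density lborel (\<lambda>x. ennreal (std_normal_density x))"

definition nu_dist :: "nat \<Rightarrow> real measure" where
  "nu_dist N = distr (PiM {..<N} (\<lambda>_. std_gauss)) borel
                     (\<lambda>x. (\<Sum>m<N. \<bar>x m\<bar>) / real N)"

text \<open>Non-increasing rearrangement of the vector (v 0, ..., v (n-1)), 1-indexed:
  decr_rearr v n 1 is the largest entry, decr_rearr v n n the smallest.\<close>
definition decr_rearr :: "(nat \<Rightarrow> real) \<Rightarrow> nat \<Rightarrow> nat \<Rightarrow> real" where
  "decr_rearr v n i = rev (sort (map v [0..<n])) ! (i - 1)"

end

theory Submission
  imports Defs
begin

(* Since |x_1| + ... + |x_N| is the maximum of e_1 x_1 + ... + e_N x_N over the 2^N sign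
   vectors e, the event nu >= t is covered by the 2^N events e.x >= N t, and e.x / sqrt N is
   standard normal; this is (i). With the Gaussian tail bound exp (-s^2/2) and
   2^N = exp (N ln 2) <= exp (N t^2/4) it gives the exponential bound. For (ii), nu*_r >= t
   means that at least r = 2^k of the n = 2^j independent coordinates are >= t; a union bound
   over the (n choose r) <= (e n / r)^r sets of r coordinates gives the estimate. *)

lemma prob_space_std_gauss: "prob_space std_gauss"
  unfolding std_gauss_def by (rule prob_space_normal_density) simp

lemma sets_std_gauss [measurable_cong, simp]: "sets std_gauss = sets borel"
  unfolding std_gauss_def by simp

lemma distributed_std_normal_density_iff:
  "distributed M lborel X std_normal_density \<longleftrightarrow>
     X \<in> borel_measurable M \<and> distr M borel X = std_gauss"
  by (auto simp: distributed_def std_gauss_def distr_def)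

lemma distr_PiM_std_gauss_component:
  assumes "i \<in> I"
  shows "distr (PiM I (\<lambda>_. std_gauss)) borel (\<lambda>x. x i) = std_gauss"
proof -
  have "distr (PiM I (\<lambda>_. std_gauss)) borel (\<lambda>x. x i)
      = distr (PiM I (\<lambda>_. std_gauss)) std_gauss (\<lambda>x. x i)"
    by (intro distr_cong) simp_all
  also have "\<dots> = std_gauss"
    using assms by (intro distr_PiM_component prob_space_std_gauss)
  finally show ?thesis .
qed

lemma indep_vars_PiM_components:
  assumes "\<And>i. i \<in> I \<Longrightarrow> prob_space (M i)" and "I \<noteq> {}"
  shows "prob_space.indep_vars (PiM I M) M (\<lambda>i x. x i) I"
proof -
  interpret P: prob_space "PiM I M" by (intro prob_space_PiM assms)
  have "distr (PiM I M) (PiM I M) (\<lambda>x. \<lambda>i\<in>I. x i) = distr (PiM I M) (PiM I M) (\<lambda>x. x)"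
    by (intro distr_cong) (auto simp: space_PiM PiE_def extensional_restrict)
  also have "\<dots> = PiM I (\<lambda>i. distr (PiM I M) (M i) (\<lambda>x. x i))"
    using assms by (auto intro!: PiM_cong distr_PiM_component[symmetric])
  finally show ?thesis
    using assms by (subst P.indep_vars_iff_distr_eq_PiM') auto
qed

lemma distr_normalized_signed_sum_std_gauss:
  assumes I: "finite I" "I \<noteq> {}" and e: "\<And>i. i \<in> I \<Longrightarrow> \<bar>e i\<bar> = 1"
  shows "distr (PiM I (\<lambda>_. std_gauss)) borel (\<lambda>x. (\<Sum>i\<in>I. e i * x i) / sqrt (card I))
           = std_gauss"
proof -
  interpret P: prob_space "PiM I (\<lambda>_. std_gauss)"
    by (intro prob_space_PiM prob_space_std_gauss)
  have indep: "P.indep_vars (\<lambda>_. borel) (\<lambda>i x. e i * x i) I"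
    by (rule P.indep_vars_compose2[OF indep_vars_PiM_components])
       (use I prob_space_std_gauss in auto)
  have "distributed (PiM I (\<lambda>_. std_gauss)) lborel (\<lambda>x. 0 + e i * x i)
          (normal_density (0 + e i * 0) (\<bar>e i\<bar> * 1))" if "i \<in> I" for i
    using that e[OF that]
    by (intro P.normal_density_affine)
       (auto simp: distributed_std_normal_density_iff distr_PiM_std_gauss_component)
  then have "distributed (PiM I (\<lambda>_. std_gauss)) lborel (\<lambda>x. \<Sum>i\<in>I. e i * x i)
               (normal_density (\<Sum>i\<in>I. 0) (sqrt (\<Sum>i\<in>I. 1\<^sup>2)))"
    using e by (intro P.sum_indep_normal I indep) auto
  then have "distributed (PiM I (\<lambda>_. std_gauss)) lborel
               (\<lambda>x. 0 + (1 / sqrt (card I)) * (\<Sum>i\<in>I. e i * x i))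
               (normal_density (0 + (1 / sqrt (card I)) * 0) (\<bar>1 / sqrt (card I)\<bar> * sqrt (card I)))"
    using I by (intro P.normal_density_affine) (auto simp: card_gt_0_iff)
  then show ?thesis
    using I by (simp add: distributed_std_normal_density_iff card_gt_0_iff)
qed

lemma measure_std_gauss_atLeast_le:
  assumes "s \<ge> 0"
  shows "measure std_gauss {s..} \<le> exp (- s\<^sup>2 / 2)"
proof -
  have pointwise: "std_normal_density x \<le> exp (- s\<^sup>2 / 2) * normal_density s 1 x"
    if "s \<le> x" for x
  proof -
    have "- x\<^sup>2 / 2 \<le> - s\<^sup>2 / 2 + - (x - s)\<^sup>2 / 2"
      using that assms by (simp add: power2_eq_square algebra_simps mult_left_mono)
    then have "exp (- x\<^sup>2 / 2) \<le> exp (- s\<^sup>2 / 2) * exp (- (x - s)\<^sup>2 / 2)"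
      by (simp add: exp_add[symmetric])
    then show ?thesis
      by (simp add: std_normal_density_def normal_density_def divide_simps)
  qed
  have "emeasure std_gauss {s..}
      = (\<integral>\<^sup>+x. ennreal (std_normal_density x) * indicator {s..} x \<partial>lborel)"
    unfolding std_gauss_def by (simp add: emeasure_density)
  also have "\<dots>
      \<le> (\<integral>\<^sup>+x. ennreal (exp (- s\<^sup>2 / 2)) * ennreal (normal_density s 1 x) \<partial>lborel)"
    using pointwise by (intro nn_integral_mono) (simp add: indicator_def ennreal_mult'[symmetric])
  also have "\<dots>
      = ennreal (exp (- s\<^sup>2 / 2)) * (\<integral>\<^sup>+x. ennreal (normal_density s 1 x) \<partial>lborel)"
    by (simp add: nn_integral_cmult)
  also have "(\<integral>\<^sup>+x. ennreal (normal_density s 1 x) \<partial>lborel) = 1"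
    by (subst nn_integral_eq_integral) auto
  finally show ?thesis
    by (simp add: measure_def enn2real_leI)
qed

lemma measure_PiM_std_gauss_signed_sum_ge:
  fixes N :: nat
  assumes "N \<ge> 1"
  shows "measure (PiM {..<N} (\<lambda>_. std_gauss))
           {x \<in> space (PiM {..<N} (\<lambda>_. std_gauss)).
              c \<le> (\<Sum>m<N. (if m \<in> S then 1 else -1) * x m) / sqrt N}
         = measure std_gauss {c..}"
proof -
  let ?P = "PiM {..<N} (\<lambda>_. std_gauss)"
  let ?f = "\<lambda>x. (\<Sum>m<N. (if m \<in> S then 1 else -1) * x m) / sqrt N"
  have "?f \<in> borel_measurable ?P"
    by measurable
  then have "measure ?P {x \<in> space ?P. c \<le> ?f x} = measure (distr ?P borel ?f) {c..}"
    by (subst measure_distr) (auto simp: vimage_def Int_def conj_commute)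
  also have "distr ?P borel ?f = std_gauss"
    using distr_normalized_signed_sum_std_gauss[of "{..<N}" "\<lambda>m. if m \<in> S then 1 else -1"] assms
    by (simp add: lessThan_empty_iff)
  finally show ?thesis .
qed

lemma nu_dist_tail_le_std_gauss_tail:
  assumes N: "N \<ge> 1"
  shows "measure (nu_dist N) {t..} \<le> 2 ^ N * measure std_gauss {sqrt N * t..}"
proof -
  define P where "P = PiM {..<N} (\<lambda>_. std_gauss)"
  interpret P: prob_space P
    unfolding P_def by (intro prob_space_PiM prob_space_std_gauss)
  define A where "A S = {x \<in> space P.
    sqrt N * t \<le> (\<Sum>m<N. (if m \<in> S then 1 else -1) * x m) / sqrt N}" for S
  have A_events: "A S \<in> P.events" for S
    unfolding A_def P_def by measurable
  have cover: "{x \<in> space P. t \<le> (\<Sum>m<N. \<bar>x m\<bar>) / N} \<subseteq> (\<Union>S\<in>Pow {..<N}. A S)"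
  proof
    fix x assume x: "x \<in> {x \<in> space P. t \<le> (\<Sum>m<N. \<bar>x m\<bar>) / N}"
    define S where "S = {m. m < N \<and> 0 \<le> x m}"
    have "(\<Sum>m<N. (if m \<in> S then 1 else -1) * x m) = (\<Sum>m<N. \<bar>x m\<bar>)"
      by (intro sum.cong) (auto simp: S_def)
    also have "\<dots> = (\<Sum>m<N. \<bar>x m\<bar>) / N * sqrt N * sqrt N"
      using N by (simp add: mult.assoc)
    finally have "(\<Sum>m<N. (if m \<in> S then 1 else -1) * x m) / sqrt N
        = sqrt N * ((\<Sum>m<N. \<bar>x m\<bar>) / N)"
      using N by simp
    moreover have "sqrt N * t \<le> sqrt N * ((\<Sum>m<N. \<bar>x m\<bar>) / N)"
      using x by (intro mult_left_mono) auto
    ultimately have "x \<in> A S"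
      using x by (simp add: A_def)
    then show "x \<in> (\<Union>S\<in>Pow {..<N}. A S)"
      by (auto simp: S_def)
  qed
  have "measure (nu_dist N) {t..} = measure P {x \<in> space P. t \<le> (\<Sum>m<N. \<bar>x m\<bar>) / N}"
    unfolding nu_dist_def P_def[symmetric]
    by (subst measure_distr) (auto simp: P_def vimage_def Int_def conj_commute)
  also have "\<dots> \<le> measure P (\<Union>S\<in>Pow {..<N}. A S)"
    using cover A_events by (intro P.finite_measure_mono) auto
  also have "\<dots> \<le> (\<Sum>S\<in>Pow {..<N}. measure P (A S))"
    using A_events by (intro P.finite_measure_subadditive_finite) auto
  also have "\<dots> = 2 ^ N * measure std_gauss {sqrt N * t..}"
    using measure_PiM_std_gauss_signed_sum_ge[OF N] by (simp add: A_def P_def card_Pow)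
  finally show ?thesis .
qed

lemma nu_dist_tail_le_exp:
  assumes N: "N \<ge> 1" and t: "t \<ge> 2 * sqrt (ln 2)"
  shows "measure (nu_dist N) {t..} \<le> exp (- real N * t\<^sup>2 / 4)"
proof -
  have "0 \<le> t"
    using order_trans[OF _ t] by simp
  have "(2 * sqrt (ln 2))\<^sup>2 \<le> t\<^sup>2"
    using t by (intro power_mono) auto
  then have "4 * ln 2 \<le> t\<^sup>2"
    by (simp add: power_mult_distrib)
  have "measure (nu_dist N) {t..} \<le> 2 ^ N * measure std_gauss {sqrt N * t..}"
    by (rule nu_dist_tail_le_std_gauss_tail[OF N])
  also have "\<dots> \<le> 2 ^ N * exp (- (sqrt N * t)\<^sup>2 / 2)"
    using \<open>0 \<le> t\<close> by (intro mult_left_mono measure_std_gauss_atLeast_le) auto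
  also have "(sqrt N * t)\<^sup>2 = N * t\<^sup>2"
    by (simp add: power_mult_distrib)
  also have "(2::real) ^ N = exp (N * ln 2)"
    by (simp add: exp_of_nat_mult)
  also have "exp (N * ln 2) * exp (- (N * t\<^sup>2) / 2) = exp (N * ln 2 - N * t\<^sup>2 / 2)"
    by (simp add: exp_add[symmetric])
  also have "\<dots> \<le> exp (- real N * t\<^sup>2 / 4)"
    using mult_left_mono[OF \<open>4 * ln 2 \<le> t\<^sup>2\<close>, of "real N"] by simp
  finally show ?thesis .
qed

lemma power_div_fact_le_exp:
  fixes x :: real
  assumes "0 \<le> x"
  shows "x ^ n / fact n \<le> exp x"
proof -
  have "(\<Sum>k\<in>{n}. x ^ k /\<^sub>R fact k) \<le> (\<Sum>k. x ^ k /\<^sub>R fact k)"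
    by (rule sum_le_suminf[OF summable_exp_generic]) (use assms in auto)
  then show ?thesis
    by (simp add: exp_def divide_inverse mult.commute)
qed

lemma binomial_le_exp_mult_div_power: "real (n choose r) \<le> (exp 1 * n / r) ^ r"
proof (cases "r = 0")
  case False
  have "real (n choose r) * fact r \<le> real n ^ r"
    using binomial_fact_pow[of n r] by (metis of_nat_fact of_nat_le_iff of_nat_mult of_nat_power)
  then have "real (n choose r) \<le> real n ^ r / fact r"
    by (simp add: field_simps)
  also have "\<dots> = (n / r) ^ r * (real r ^ r / fact r)"
    using False by (simp add: power_divide)
  also have "\<dots> \<le> (n / r) ^ r * exp r"
    by (intro mult_left_mono power_div_fact_le_exp) auto
  also have "exp (real r) = exp 1 ^ r"
    using exp_of_nat_mult[of r 1] by simp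
  finally show ?thesis
    by (simp add: power_mult_distrib power_divide mult.commute)
qed simp

lemma decr_rearr_ge_imp_card_ge:
  assumes "1 \<le> r" "r \<le> n" and t: "t \<le> decr_rearr v n r"
  shows "r \<le> card {i. i < n \<and> t \<le> v i}"
proof -
  define xs where "xs = map v [0..<n]"
  define L where "L = rev (sort xs)"
  have "length L = n"
    by (simp add: L_def xs_def)
  have "sorted_wrt (\<ge>) L"
    by (simp add: L_def sorted_wrt_rev)
  moreover have "t \<le> L ! (r - 1)"
    using t by (simp add: decr_rearr_def L_def xs_def)
  ultimately have "t \<le> L ! i" if "i < r" for i
    using that assms \<open>length L = n\<close>
    by (cases "i = r - 1") (auto simp: sorted_wrt_iff_nth_less intro: order_trans)
  then have "{..<r} \<subseteq> {i. i < length L \<and> t \<le> L ! i}"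
    using assms \<open>length L = n\<close> by auto
  then have "card {..<r} \<le> card {i. i < length L \<and> t \<le> L ! i}"
    by (intro card_mono) auto
  then have "r \<le> length (filter ((\<le>) t) L)"
    by (simp add: length_filter_conv_card)
  also have "\<dots> = length (filter ((\<le>) t) xs)"
    by (simp add: L_def rev_filter[symmetric] filter_sort)
  also have "\<dots> = card {i. i < n \<and> t \<le> v i}"
    unfolding xs_def length_filter_conv_card by (intro arg_cong[where f = card]) auto
  finally show ?thesis .
qed

lemma card_ge_eq_UN_INT:
  assumes "finite I" "r > 0"
  shows "{x. r \<le> card {i \<in> I. x \<in> A i}}
           = (\<Union>S\<in>{S. S \<subseteq> I \<and> card S = r}. \<Inter>i\<in>S. A i)"
proof (intro equalityI subsetI)
  fix x assume "x \<in> {x. r \<le> card {i \<in> I. x \<in> A i}}"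
  then obtain S where "S \<subseteq> {i \<in> I. x \<in> A i}" "card S = r"
    by (auto elim: obtain_subset_with_card_n)
  then show "x \<in> (\<Union>S\<in>{S. S \<subseteq> I \<and> card S = r}. \<Inter>i\<in>S. A i)"
    by blast
next
  fix x assume "x \<in> (\<Union>S\<in>{S. S \<subseteq> I \<and> card S = r}. \<Inter>i\<in>S. A i)"
  then obtain S where "S \<subseteq> {i \<in> I. x \<in> A i}" "card S = r"
    by blast
  then show "x \<in> {x. r \<le> card {i \<in> I. x \<in> A i}}"
    using assms card_mono[of "{i \<in> I. x \<in> A i}" S] by auto
qed

context prob_space
begin

lemma events_card_ge:
  assumes "finite I" "\<And>i. i \<in> I \<Longrightarrow> A i \<in> events"
  shows "{x \<in> space M. r \<le> card {i \<in> I. x \<in> A i}} \<in> events"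
proof (cases "r = 0")
  case False
  have "{x \<in> space M. r \<le> card {i \<in> I. x \<in> A i}}
      = space M \<inter> (\<Union>S\<in>{S. S \<subseteq> I \<and> card S = r}. \<Inter>i\<in>S. A i)"
    using card_ge_eq_UN_INT[OF \<open>finite I\<close>, of r A] False by (simp add: Collect_conj_eq)
  moreover have "(\<Inter>i\<in>S. A i) \<in> events" if "S \<subseteq> I" "card S = r" for S
    using that False assms by (intro sets.finite_INT) (auto intro: finite_subset)
  ultimately show ?thesis
    using \<open>finite I\<close> by auto
qed simp

lemma prob_card_indep_events_ge:
  assumes I: "finite I" and indep: "indep_events A I"
    and p: "\<And>i. i \<in> I \<Longrightarrow> prob (A i) \<le> p"
  shows "prob {x \<in> space M. r \<le> card {i \<in> I. x \<in> A i}} \<le> real (card I choose r) * p ^ r"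
proof (cases "r = 0")
  case False
  define F where "F = {S. S \<subseteq> I \<and> card S = r}"
  have "finite F"
    using I by (auto simp: F_def)
  have A_events: "A i \<in> events" if "i \<in> I" for i
    using indep that by (auto simp: indep_events_def)
  have S: "S \<subseteq> I" "finite S" "S \<noteq> {}" "card S = r" if "S \<in> F" for S
    using that I False by (auto simp: F_def intro: finite_subset)
  have INT_events: "(\<Inter>i\<in>S. A i) \<in> events" if "S \<in> F" for S
    using S[OF that] A_events by (intro sets.finite_INT) auto
  have "{x \<in> space M. r \<le> card {i \<in> I. x \<in> A i}} \<subseteq> (\<Union>S\<in>F. \<Inter>i\<in>S. A i)"
    using card_ge_eq_UN_INT[OF I, of r A] False by (auto simp: F_def)
  then have "prob {x \<in> space M. r \<le> card {i \<in> I. x \<in> A i}}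
      \<le> prob (\<Union>S\<in>F. \<Inter>i\<in>S. A i)"
    using \<open>finite F\<close> INT_events by (intro finite_measure_mono) auto
  also have "\<dots> \<le> (\<Sum>S\<in>F. prob (\<Inter>i\<in>S. A i))"
    using \<open>finite F\<close> INT_events by (intro finite_measure_subadditive_finite) auto
  also have "\<dots> \<le> (\<Sum>S\<in>F. p ^ r)"
  proof (intro sum_mono)
    fix S assume "S \<in> F"
    then have "prob (\<Inter>i\<in>S. A i) = (\<Prod>i\<in>S. prob (A i))"
      using S indep by (auto simp: indep_events_def)
    also have "\<dots> \<le> (\<Prod>i\<in>S. p)"
      using S[OF \<open>S \<in> F\<close>] p by (intro prod_mono) auto
    also have "\<dots> = p ^ r"
      using S[OF \<open>S \<in> F\<close>] by simp
    finally show "prob (\<Inter>i\<in>S. A i) \<le> p ^ r" .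
  qed
  also have "\<dots> = real (card I choose r) * p ^ r"
    using I by (simp add: F_def n_subsets)
  finally show ?thesis .
qed simp

lemma prob_decr_rearr_ge:
  fixes X :: "nat \<Rightarrow> 'a \<Rightarrow> real"
  assumes indep: "indep_vars (\<lambda>_. borel) X {..<n}"
    and tail: "\<And>i. i < n \<Longrightarrow> prob {x \<in> space M. t \<le> X i x} \<le> p"
    and r: "1 \<le> r" "r \<le> n"
  shows "prob {x \<in> space M. t \<le> decr_rearr (\<lambda>i. X i x) n r} \<le> (exp 1 * n / r * p) ^ r"
proof -
  define A where "A i = {x \<in> space M. t \<le> X i x}" for i
  have indep_A: "indep_events A {..<n}"
    unfolding A_def by (rule indep_eventsI_indep_vars[OF indep]) simp
  then have A_events: "A i \<in> events" if "i < n" for i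
    using that by (auto simp: indep_events_def)
  have "0 \<le> p"
    using order_trans[OF measure_nonneg tail[of 0]] r by simp
  have "{x \<in> space M. t \<le> decr_rearr (\<lambda>i. X i x) n r}
      \<subseteq> {x \<in> space M. r \<le> card {i \<in> {..<n}. x \<in> A i}}"
    using decr_rearr_ge_imp_card_ge[OF r] by (auto simp: A_def)
  then have "prob {x \<in> space M. t \<le> decr_rearr (\<lambda>i. X i x) n r}
      \<le> prob {x \<in> space M. r \<le> card {i \<in> {..<n}. x \<in> A i}}"
    using A_events by (intro finite_measure_mono events_card_ge) auto
  also have "\<dots> \<le> real (n choose r) * p ^ r"
    using prob_card_indep_events_ge[OF _ indep_A, of p r] tail by (simp add: A_def)
  also have "\<dots> \<le> (exp 1 * n / r) ^ r * p ^ r"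
    using \<open>0 \<le> p\<close> by (intro mult_right_mono binomial_le_exp_mult_div_power) auto
  also have "\<dots> = (exp 1 * n / r * p) ^ r"
    by (rule power_mult_distrib[symmetric])
  finally show ?thesis .
qed

end

theorem lemma4p5:
  fixes N :: nat
  assumes "N \<ge> 1"
  shows "(\<forall>t::real. t > 0 \<longrightarrow>
            measure (nu_dist N) {t..} \<le> 2 ^ N * measure std_gauss {sqrt (real N) * t..})
       \<and> (\<forall>t::real. t \<ge> 2 * sqrt (ln 2) \<longrightarrow>
            measure (nu_dist N) {t..} \<le> exp (- real N * t\<^sup>2 / 4))
       \<and> (\<forall>(M :: 'a measure) (X :: nat \<Rightarrow> 'a \<Rightarrow> real) (j::nat) (k::nat) (t::real).
            prob_space M \<longrightarrow>
            prob_space.indep_vars M (\<lambda>_. borel) X {..<2 ^ j} \<longrightarrow>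
            (\<forall>i < 2 ^ j. distr M borel (X i) = nu_dist N) \<longrightarrow>
            k < j \<longrightarrow> t \<ge> 2 * sqrt (ln 2) \<longrightarrow>
            measure M {x \<in> space M. decr_rearr (\<lambda>i. X i x) (2 ^ j) (2 ^ k) \<ge> t}
              \<le> (exp 1 * 2 ^ (j - k) * exp (- real N * t\<^sup>2 / 4)) ^ (2 ^ k))"
proof (intro conjI allI impI)
  fix t :: real
  show "measure (nu_dist N) {t..} \<le> 2 ^ N * measure std_gauss {sqrt (real N) * t..}"
    by (rule nu_dist_tail_le_std_gauss_tail[OF assms])
next
  fix t :: real assume "t \<ge> 2 * sqrt (ln 2)"
  then show "measure (nu_dist N) {t..} \<le> exp (- real N * t\<^sup>2 / 4)"
    by (rule nu_dist_tail_le_exp[OF assms])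
next
  fix M :: "'a measure" and X :: "nat \<Rightarrow> 'a \<Rightarrow> real" and j k :: nat and t :: real
  assume "prob_space M" and indep: "prob_space.indep_vars M (\<lambda>_. borel) X {..<2 ^ j}"
    and law: "\<forall>i < 2 ^ j. distr M borel (X i) = nu_dist N"
    and "k < j" and t: "t \<ge> 2 * sqrt (ln 2)"
  interpret prob_space M by fact
  have "prob {x \<in> space M. t \<le> X i x} \<le> exp (- real N * t\<^sup>2 / 4)" if "i < 2 ^ j" for i
  proof -
    have "X i \<in> borel_measurable M"
      using indep that by (auto simp: indep_vars_def)
    then have "prob {x \<in> space M. t \<le> X i x} = measure (distr M borel (X i)) {t..}"
      by (subst measure_distr) (auto simp: vimage_def Int_def conj_commute)
    also have "\<dots> \<le> exp (- real N * t\<^sup>2 / 4)"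
      using law that nu_dist_tail_le_exp[OF assms t] by simp
    finally show ?thesis .
  qed
  then have "prob {x \<in> space M. t \<le> decr_rearr (\<lambda>i. X i x) (2 ^ j) (2 ^ k)}
      \<le> (exp 1 * real (2 ^ j) / real (2 ^ k) * exp (- real N * t\<^sup>2 / 4)) ^ 2 ^ k"
    using \<open>k < j\<close> by (intro prob_decr_rearr_ge indep) (auto intro: power_increasing)
  also have "exp 1 * real (2 ^ j) / real (2 ^ k) = exp 1 * 2 ^ (j - k)"
    using \<open>k < j\<close> by (simp add: power_diff)
  finally show "measure M {x \<in> space M. decr_rearr (\<lambda>i. X i x) (2 ^ j) (2 ^ k) \<ge> t}
      \<le> (exp 1 * 2 ^ (j - k) * exp (- real N * t\<^sup>2 / 4)) ^ (2 ^ k)" .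
qed

end
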